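(* Suppose $F$ is a smooth function solving $F''(t) = \left(\frac{2}{t^2} - 3Q(t)^2\right)F(t)$ for $1 \le t < \infty$. Then there are constants $c_1, c_2$ such that $$F(t) = c_1\,(t^2 + \eta_1(t)) + c_2\left(\frac{1}{t} + \eta_2(t)\right),$$ where $\eta_1, \eta_2$ are smooth functions on $[1,\infty)$ satisfying $\sup_{1\le t<\infty}\left(|e^t\eta_1(t)| + |e^t\eta_2(t)|\right) < \infty$.
   Context: $Q(t)$, $t \ge 0$, denotes the radial profile of the positive radial ground state of $\Delta\phi - \phi + |\phi|^2\phi = 0$ on $\mathbb{R}^3$. That is, $Q(x) = Q(|x|)$ is the positive radial solution, and its profile solves $-Q'' - \frac{2}{t}Q' + Q - Q^3 = 0$. *)

theory Defs
  imports "HOL-Analysis.Analysis"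
begin

definition smooth_on_real :: "real set \<Rightarrow> (real \<Rightarrow> real) \<Rightarrow> bool" where
  "smooth_on_real S f \<longleftrightarrow>
     (\<exists>D :: nat \<Rightarrow> real \<Rightarrow> real. D 0 = f \<and>
        (\<forall>n. \<forall>t\<in>S. (D n has_real_derivative D (Suc n) t) (at t within S)))"

text \<open>Radial profile of a positive radial ground state of
  Delta phi - phi + phi^3 = 0 on R^3: a positive, decaying solution of
  -Q'' - (2/t) Q' + Q - Q^3 = 0 on (0,inf), regular at the origin (Q'(0) = 0).\<close>
definition ground_state_profile :: "(real \<Rightarrow> real) \<Rightarrow> bool" where
  "ground_state_profile Q \<longleftrightarrow>
     (\<forall>t\<ge>0. Q t > 0) \<and>
     (\<exists>Q' Q'' :: real \<Rightarrow> real.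
        (\<forall>t\<ge>0. (Q has_real_derivative Q' t) (at t within {0..})) \<and>
        (\<forall>t\<ge>0. (Q' has_real_derivative Q'' t) (at t within {0..})) \<and>
        Q' 0 = 0 \<and>
        (\<forall>t>0. - Q'' t - (2 / t) * Q' t + Q t - (Q t) ^ 3 = 0)) \<and>
     (Q \<longlongrightarrow> 0) at_top"

end

theory Submission
  imports Defs "HOL-Real_Asymp.Real_Asymp"
begin

(* Writing b = -3 Q^2, the equation reads y'' = (2/t^2 + b) y, a perturbation of y'' = 2 y/t^2,
   whose solutions are t^2 and 1/t.  The maximum principle applied to u = t Q, which satisfies
   u'' = (1 - Q^2) u, gives Q = O(e^(-3t/4)), hence b = O(e^(-t)/t^4).  By variation of constants,
   a solution y = phi + O(e^(-t)) with phi = t^2 or phi = 1/t solves a Volterra integral equation on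
   [1, oo), which Banach's fixed point theorem solves in a suitably weighted sup norm.  The two
   solutions so obtained have Wronskian -3, so they span all solutions.  The corrections are smooth
   because each solution lies in an algebra of functions closed under differentiation, generated by
   Q, Q', t, 1/t and the solution with its derivative. *)

lemma integrable_on_atLeast_if_exp_bound:
  fixes h :: "real \<Rightarrow> real"
  assumes "continuous_on {a..} h" "\<And>s. s \<ge> a \<Longrightarrow> \<bar>h s\<bar> \<le> C * exp (-s)"
  shows "h integrable_on {a..}"
proof (rule measurable_bounded_by_integrable_imp_integrable_real)
  show "h \<in> borel_measurable (lebesgue_on {a..})"
    by (rule continuous_imp_measurable_on_sets_lebesgue) (use assms in auto)
  show "(\<lambda>s. C * exp (-s)) integrable_on {a..}"
    using integrable_on_exp_minus_to_infinity[of 1 a] integrable_on_cmult_left by fastforce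
qed (use assms in auto)

lemma integral_atLeast_split:
  fixes h :: "real \<Rightarrow> real"
  assumes "continuous_on {a..} h" "\<And>s. s \<ge> a \<Longrightarrow> \<bar>h s\<bar> \<le> C * exp (-s)" "a \<le> t"
  shows "integral {t..} h = integral {a..} h - integral {a..t} h"
proof -
  have "(h has_integral (integral {a..t} h + integral {t..} h)) ({a..t} \<union> {t..})"
  proof (rule has_integral_Un)
    show "(h has_integral integral {t..} h) {t..}"
      by (rule integrable_integral, rule integrable_on_atLeast_if_exp_bound[of t h C])
         (use assms in \<open>auto intro: continuous_on_subset\<close>)
    show "(h has_integral integral {a..t} h) {a..t}"
      by (rule integrable_integral, rule integrable_continuous_interval)
         (use assms in \<open>auto intro: continuous_on_subset\<close>)
    have "{a..t} \<inter> {t..} = {t}" using assms(3) by auto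
    then show "negligible ({a..t} \<inter> {t..})" by simp
  qed
  moreover have "{a..t} \<union> {t..} = {a..}" using assms(3) by auto
  ultimately show ?thesis by (simp add: integral_unique)
qed

lemma has_real_derivative_integral_atLeast:
  fixes h :: "real \<Rightarrow> real"
  assumes "continuous_on {a..} h" "\<And>s. s \<ge> a \<Longrightarrow> \<bar>h s\<bar> \<le> C * exp (-s)" "a \<le> t"
  shows "((\<lambda>x. integral {x..} h) has_real_derivative - h t) (at t within {a..})"
proof -
  have "((\<lambda>x. integral {a..x} h) has_real_derivative h t) (at t within {a..t+1})"
    by (rule integral_has_real_derivative) (use assms in \<open>auto intro: continuous_on_subset\<close>)
  moreover have "at t within {a..t+1} = at t within {a..}"
    by (rule at_within_nhd[of _ "{..<t+1}"]) auto
  ultimately have "((\<lambda>x. integral {a..x} h) has_real_derivative h t) (at t within {a..})"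
    by simp
  then have "((\<lambda>x. integral {a..} h - integral {a..x} h) has_real_derivative 0 - h t)
      (at t within {a..})"
    by (intro DERIV_diff DERIV_const)
  moreover have "t \<in> {a..}" using assms(3) by simp
  moreover have "\<And>x. x \<in> {a..} \<Longrightarrow> dist x t < 1 \<Longrightarrow>
      integral {a..} h - integral {a..x} h = integral {x..} h"
    using integral_atLeast_split[OF assms(1,2)] by (metis atLeast_iff)
  ultimately have "((\<lambda>x. integral {x..} h) has_real_derivative 0 - h t) (at t within {a..})"
    by (rule has_field_derivative_transform_within[OF _ zero_less_one])
  then show ?thesis by simp
qed

lemma has_integral_atLeast_if_antiderivative_tendsto:
  fixes g G :: "real \<Rightarrow> real"
  assumes "\<And>x. x \<ge> a \<Longrightarrow> (G has_real_derivative g x) (at x)"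
    and "continuous_on {a..} g" "\<And>x. x \<ge> a \<Longrightarrow> g x \<ge> 0" "(G \<longlongrightarrow> L) at_top"
  shows "(g has_integral (L - G a)) {a..}"
proof (rule has_integral_to_inf)
  show "g integrable_on {a..y}" for y
    by (rule integrable_continuous_interval, rule continuous_on_subset[OF assms(2)]) auto
  have "integral {a..y} g = G y - G a" if "a \<le> y" for y
  proof (rule integral_unique, rule fundamental_theorem_of_calculus)
    fix x assume "x \<in> {a..y}"
    then have "(G has_real_derivative g x) (at x within {a..y})"
      using has_field_derivative_at_within[OF assms(1)] by simp
    then show "(G has_vector_derivative g x) (at x within {a..y})"
      by (simp add: has_real_derivative_iff_has_vector_derivative)
  qed fact
  then have "\<forall>\<^sub>F y in at_top. G y - G a = integral {a..y} g"
    unfolding eventually_at_top_linorder by (metis order_refl)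
  moreover have "((\<lambda>y. G y - G a) \<longlongrightarrow> L - G a) at_top"
    by (intro tendsto_intros assms)
  ultimately show "((\<lambda>y. integral {a..y} g) \<longlongrightarrow> L - G a) at_top"
    by (rule Lim_transform_eventually[rotated])
qed (use assms in auto)

lemma abs_integral_atLeast_le:
  fixes f g :: "real \<Rightarrow> real"
  assumes "continuous_on {t..} f" "\<And>s. s \<ge> t \<Longrightarrow> \<bar>f s\<bar> \<le> g s" "(g has_integral I) {t..}"
  shows "\<bar>integral {t..} f\<bar> \<le> I"
  using integral_norm_bound_integral'[of "{t..}" f g I] assms
    continuous_imp_measurable_on_sets_lebesgue[OF assms(1)] by auto

lemma has_integral_exp_minus_atLeast:
  "((\<lambda>s. M * exp (-s)) has_integral (M * exp (-t))) {t::real..}"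
  using has_integral_mult_right[OF has_integral_exp_minus_to_infinity[of 1 t], of M] by simp

lemma power4_mult_exp_le:
  fixes s :: real
  assumes "s \<ge> 0"
  shows "s ^ 4 * exp (-(3/2) * s) \<le> 4096 * exp (-s)"
proof -
  have "s/8 \<le> exp (s/8)" using exp_ge_add_one_self[of "s/8"] by linarith
  then have "(s/8) ^ 4 \<le> exp (s/8) ^ 4"
    using assms by (intro power_mono) auto
  also have "exp (s/8) ^ 4 = exp (s/2)" by (simp add: exp_of_nat_mult[symmetric])
  finally have "s ^ 4 * exp (-(3/2) * s) \<le> 4096 * exp (s/2) * exp (-(3/2) * s)"
    by (intro mult_right_mono) (auto simp: power_divide)
  also have "\<dots> = 4096 * exp (-s)" by (simp add: mult.assoc exp_add[symmetric])
  finally show ?thesis .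
qed

lemma abs_exp_mult_le:
  fixes x C t :: real
  assumes "\<bar>x\<bar> \<le> C * exp (-t)"
  shows "\<bar>exp t * x\<bar> \<le> C"
proof -
  have "\<bar>exp t * x\<bar> = exp t * \<bar>x\<bar>" by (simp add: abs_mult)
  also have "\<dots> \<le> exp t * (C * exp (-t))" using assms by (rule mult_left_mono) simp
  also have "\<dots> = C" by (simp add: exp_minus field_simps)
  finally show ?thesis .
qed

lemma exp_bound_extend_left:
  fixes f :: "real \<Rightarrow> real"
  assumes "continuous_on {a..T} f" and tail: "\<And>t. t \<ge> T \<Longrightarrow> f t \<le> C * exp (-c * t)"
  obtains C' where "\<And>t. t \<ge> a \<Longrightarrow> f t \<le> C' * exp (-c * t)"
proof -
  have "bounded ((\<lambda>s. f s * exp (c * s)) ` {a..T})"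
    by (intro compact_imp_bounded compact_continuous_image compact_Icc continuous_intros assms(1))
  then obtain M where M: "\<forall>s\<in>{a..T}. \<bar>f s * exp (c * s)\<bar> \<le> M"
    unfolding bounded_iff by auto
  show ?thesis
  proof (rule that[of "max M C"])
    fix t assume "t \<ge> a"
    show "f t \<le> max M C * exp (-c * t)"
    proof (cases "t \<ge> T")
      case True
      then have "f t \<le> C * exp (-c * t)" by (rule tail)
      also have "\<dots> \<le> max M C * exp (-c * t)" by (intro mult_right_mono) auto
      finally show ?thesis .
    next
      case False
      then have "\<bar>f t * exp (c * t)\<bar> \<le> M" using M \<open>t \<ge> a\<close> by simp
      then have "f t * exp (c * t) \<le> M" by linarith
      then have "f t \<le> M * exp (-c * t)" by (simp add: exp_minus field_simps)
      also have "\<dots> \<le> max M C * exp (-c * t)" by (intro mult_right_mono) auto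
      finally show ?thesis .
    qed
  qed
qed

lemma nonpos_if_second_derivative_pos_where_pos:
  fixes w w' w'' :: "real \<Rightarrow> real"
  assumes dw: "\<And>s. s \<in> {T..R} \<Longrightarrow> (w has_real_derivative w' s) (at s)"
    and dw': "\<And>s. s \<in> {T..R} \<Longrightarrow> (w' has_real_derivative w'' s) (at s)"
    and "w T \<le> 0" "w R \<le> 0"
    and convex: "\<And>s. s \<in> {T..R} \<Longrightarrow> w s > 0 \<Longrightarrow> w'' s > 0"
    and t: "t \<in> {T..R}"
  shows "w t \<le> 0"
proof (rule ccontr)
  assume "\<not> w t \<le> 0"
  have "continuous_on {T..R} w"
    using dw by (intro continuous_at_imp_continuous_on ballI) (auto dest: DERIV_isCont)
  then obtain m where m: "m \<in> {T..R}" "\<And>s. s \<in> {T..R} \<Longrightarrow> w s \<le> w m"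
    using continuous_attains_sup[of "{T..R}" w] t by fastforce
  have "w m > 0" using m(2)[OF t] \<open>\<not> w t \<le> 0\<close> by auto
  then have mTR: "T < m" "m < R" using m(1) \<open>w T \<le> 0\<close> \<open>w R \<le> 0\<close> by (auto simp: less_le)
  have critical: "w' m = 0"
  proof (rule DERIV_local_max[OF dw[OF m(1)]])
    show "0 < min (m - T) (R - m)" using mTR by auto
    show "\<forall>y. \<bar>m - y\<bar> < min (m - T) (R - m) \<longrightarrow> w y \<le> w m"
      by (auto intro!: m(2))
  qed
  obtain d where d: "d > 0" "\<And>h. h > 0 \<Longrightarrow> h < d \<Longrightarrow> w' m < w' (m + h)"
    using DERIV_pos_inc_right[OF dw'[OF m(1)] convex[OF m(1) \<open>w m > 0\<close>]] by auto
  define h where "h = min d (R - m) / 2"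
  have h: "0 < h" "h < d" "m + h \<le> R" using d(1) mTR by (auto simp: h_def min_def field_simps)
  obtain z where z: "m < z" "z < m + h" "w (m + h) - w m = h * w' z"
    using MVT2[of m "m + h" w w'] h mTR dw by force
  have "w' z > 0" using d(2)[of "z - m"] h z critical by auto
  then have "w (m + h) > w m" using z(3) mult_pos_pos[OF h(1)] by fastforce
  moreover have "w (m + h) \<le> w m" using m(2)[of "m + h"] h mTR by auto
  ultimately show False by simp
qed

text \<open>If \<open>u'' = q u\<close> with \<open>q \<ge> a\<^sup>2\<close>, then \<open>u\<close> is dominated by
  \<open>C e\<^sup>-\<^sup>a\<^sup>s + \<epsilon> e\<^sup>a\<^sup>s\<close> (the maximum principle applied to the difference), and \<open>\<epsilon> \<rightarrow> 0\<close>.\<close>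
lemma exp_decay_if_second_derivative_ge:
  fixes u u' q :: "real \<Rightarrow> real"
  assumes a: "a > 0"
    and du: "\<And>s. s \<ge> T \<Longrightarrow> (u has_real_derivative u' s) (at s)"
    and du': "\<And>s. s \<ge> T \<Longrightarrow> (u' has_real_derivative q s * u s) (at s)"
    and q: "\<And>s. s \<ge> T \<Longrightarrow> q s \<ge> a ^ 2"
    and uT: "u T \<ge> 0"
    and growth: "((\<lambda>s. u s * exp (-a * s)) \<longlongrightarrow> 0) at_top"
    and t: "t \<ge> T"
  shows "u t \<le> u T * exp (a * (T - t))"
proof -
  define C where "C = u T * exp (a * T)"
  have C: "C \<ge> 0" using uT by (simp add: C_def)
  have "u t \<le> C * exp (-a * t) + e" if e: "e > 0" for e
  proof -
    define \<epsilon> where "\<epsilon> = e * exp (-a * t)"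
    have \<epsilon>: "\<epsilon> > 0" using e by (simp add: \<epsilon>_def)
    define w where "w s = u s - C * exp (-a * s) - \<epsilon> * exp (a * s)" for s
    define w' where "w' s = u' s + a * C * exp (-a * s) - a * \<epsilon> * exp (a * s)" for s
    define w'' where "w'' s = q s * u s - a^2 * C * exp (-a * s) - a^2 * \<epsilon> * exp (a * s)" for s
    have "\<forall>\<^sub>F s in at_top. s \<ge> t \<and> u s * exp (-a * s) < \<epsilon>"
      using eventually_ge_at_top[of t] order_tendstoD(2)[OF growth \<epsilon>] by (rule eventually_conj)
    then obtain R where R: "R \<ge> t" "u R * exp (-a * R) < \<epsilon>"
      using eventually_happens'[OF trivial_limit_at_top_linorder] by blast
    have "w t \<le> 0"
    proof (rule nonpos_if_second_derivative_pos_where_pos[of T R w w' w''])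
      show "(w has_real_derivative w' s) (at s)" if "s \<in> {T..R}" for s
        unfolding w_def[abs_def] w'_def using du[of s] that
        by (auto intro!: derivative_eq_intros)
      show "(w' has_real_derivative w'' s) (at s)" if "s \<in> {T..R}" for s
        unfolding w'_def[abs_def] w''_def using du'[of s] that
        by (auto intro!: derivative_eq_intros simp: power2_eq_square)
      have "C * exp (-a * T) = u T" by (simp add: C_def mult.assoc exp_add[symmetric])
      then show "w T \<le> 0" using \<epsilon> by (simp add: w_def)
      have "u R = u R * exp (-a * R) * exp (a * R)" by (simp add: mult.assoc exp_add[symmetric])
      also have "\<dots> < \<epsilon> * exp (a * R)" using R(2) by simp
      finally have "u R < \<epsilon> * exp (a * R)" .
      moreover have "C * exp (-a * R) \<ge> 0" using C by simp
      ultimately show "w R \<le> 0" by (simp add: w_def)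
      show "w'' s > 0" if s: "s \<in> {T..R}" and "w s > 0" for s
      proof -
        have big: "u s > C * exp (-a * s) + \<epsilon> * exp (a * s)" using \<open>w s > 0\<close> by (simp add: w_def)
        moreover have "C * exp (-a * s) + \<epsilon> * exp (a * s) > 0" using C \<epsilon> by (simp add: add_nonneg_pos)
        ultimately have "q s * u s \<ge> a^2 * u s" using q[of s] s by (intro mult_right_mono) auto
        moreover have "a^2 * u s > a^2 * (C * exp (-a * s) + \<epsilon> * exp (a * s))"
          using big a by simp
        ultimately show ?thesis by (simp add: w''_def algebra_simps)
      qed
    qed (use R t in auto)
    moreover have "\<epsilon> * exp (a * t) = e" by (simp add: \<epsilon>_def mult.assoc exp_add[symmetric])
    ultimately show ?thesis by (simp add: w_def)
  qed
  then have "u t \<le> C * exp (-a * t)" by (rule field_le_epsilon)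
  then show ?thesis by (simp add: C_def mult.assoc exp_add[symmetric] algebra_simps)
qed

lemma wronskian_constant:
  fixes u u' v v' a :: "real \<Rightarrow> real"
  assumes "convex X"
    and u: "\<And>t. t \<in> X \<Longrightarrow> (u has_real_derivative u' t) (at t within X)"
      "\<And>t. t \<in> X \<Longrightarrow> (u' has_real_derivative a t * u t) (at t within X)"
    and v: "\<And>t. t \<in> X \<Longrightarrow> (v has_real_derivative v' t) (at t within X)"
      "\<And>t. t \<in> X \<Longrightarrow> (v' has_real_derivative a t * v t) (at t within X)"
  obtains c where "\<And>t. t \<in> X \<Longrightarrow> u t * v' t - u' t * v t = c"
proof -
  have "((\<lambda>t. u t * v' t - u' t * v t) has_real_derivative 0) (at t within X)" if "t \<in> X" for t
  proof -
    have "((\<lambda>t. u t * v' t - u' t * v t) has_real_derivative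
        (u' t * v' t + a t * v t * u t) - (a t * u t * v t + v' t * u' t)) (at t within X)"
      by (intro DERIV_diff DERIV_mult u v that)
    then show ?thesis by (simp add: algebra_simps)
  qed
  then have "\<exists>c. \<forall>t\<in>X. u t * v' t - u' t * v t = c"
    by (rule has_field_derivative_zero_constant[OF \<open>convex X\<close>])
  then show ?thesis using that by blast
qed

lemma solution_in_span_if_wronskian_nonzero:
  fixes u u' v v' a F F' :: "real \<Rightarrow> real"
  assumes "convex X"
    and u: "\<And>t. t \<in> X \<Longrightarrow> (u has_real_derivative u' t) (at t within X)"
      "\<And>t. t \<in> X \<Longrightarrow> (u' has_real_derivative a t * u t) (at t within X)"
    and v: "\<And>t. t \<in> X \<Longrightarrow> (v has_real_derivative v' t) (at t within X)"
      "\<And>t. t \<in> X \<Longrightarrow> (v' has_real_derivative a t * v t) (at t within X)"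
    and F: "\<And>t. t \<in> X \<Longrightarrow> (F has_real_derivative F' t) (at t within X)"
      "\<And>t. t \<in> X \<Longrightarrow> (F' has_real_derivative a t * F t) (at t within X)"
    and W: "\<And>t. t \<in> X \<Longrightarrow> u t * v' t - u' t * v t = c" and "c \<noteq> 0"
  shows "\<exists>c1 c2. \<forall>t\<in>X. F t = c1 * u t + c2 * v t"
proof -
  obtain k1 where k1: "\<And>t. t \<in> X \<Longrightarrow> F t * u' t - F' t * u t = k1"
    using wronskian_constant[OF \<open>convex X\<close> F u] by blast
  obtain k2 where k2: "\<And>t. t \<in> X \<Longrightarrow> F t * v' t - F' t * v t = k2"
    using wronskian_constant[OF \<open>convex X\<close> F v] by blast
  have "F t = (k2 / c) * u t + (- k1 / c) * v t" if "t \<in> X" for t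
  proof -
    have "F t * c = u t * k2 - v t * k1"
      unfolding W[OF that, symmetric] k1[OF that, symmetric] k2[OF that, symmetric]
      by (simp add: algebra_simps)
    then show ?thesis using \<open>c \<noteq> 0\<close> by (simp add: field_simps)
  qed
  then show ?thesis by blast
qed

lemma power_mult_tendsto_0_if_exp_bounded:
  fixes f :: "real \<Rightarrow> real"
  assumes "\<And>t. t \<ge> 1 \<Longrightarrow> \<bar>f t\<bar> \<le> C * exp (-t)"
  shows "((\<lambda>t. t ^ k * f t) \<longlongrightarrow> 0) at_top"
proof (rule Lim_null_comparison)
  show "\<forall>\<^sub>F t in at_top. norm (t ^ k * f t) \<le> C * (t ^ k / exp t)"
    using eventually_ge_at_top[of 1]
  proof eventually_elim
    case (elim t)
    then have "t ^ k * \<bar>f t\<bar> \<le> t ^ k * (C * exp (-t))" using assms by (intro mult_left_mono) auto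
    moreover have "\<bar>t ^ k\<bar> = t ^ k" using elim by simp
    ultimately show ?case by (simp add: abs_mult exp_minus field_simps)
  qed
  show "((\<lambda>t. C * (t ^ k / exp t)) \<longlongrightarrow> 0) at_top"
    using tendsto_mult_right_zero[OF tendsto_power_div_exp_0] .
qed

text \<open>\<open>-3\<close> is the Wronskian of \<open>t\<^sup>2\<close> and \<open>1/t\<close>.\<close>
lemma wronskian_tendsto:
  fixes y1 y1' y2 y2' :: "real \<Rightarrow> real"
  assumes e1: "\<And>t. t \<ge> 1 \<Longrightarrow> \<bar>y1 t - t ^ 2\<bar> \<le> C1 * exp (-t)"
    and d1: "\<And>t. t \<ge> 1 \<Longrightarrow> \<bar>y1' t - 2 * t\<bar> \<le> C1 * exp (-t)"
    and e2: "\<And>t. t \<ge> 1 \<Longrightarrow> \<bar>y2 t - 1 / t\<bar> \<le> C2 * exp (-t)"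
    and d2: "\<And>t. t \<ge> 1 \<Longrightarrow> \<bar>y2' t + 1 / t ^ 2\<bar> \<le> C2 * exp (-t)"
  shows "((\<lambda>t. y1 t * y2' t - y1' t * y2 t) \<longlongrightarrow> -3) at_top"
proof -
  define E1 where "E1 t = y1 t - t ^ 2" for t
  define D1 where "D1 t = y1' t - 2 * t" for t
  define E2 where "E2 t = y2 t - 1 / t" for t
  define D2 where "D2 t = y2' t + 1 / t ^ 2" for t
  have lim_E1: "((\<lambda>t. t ^ k * E1 t) \<longlongrightarrow> 0) at_top" for k
    unfolding E1_def by (rule power_mult_tendsto_0_if_exp_bounded[OF e1])
  have lim_D1: "((\<lambda>t. t ^ k * D1 t) \<longlongrightarrow> 0) at_top" for k
    unfolding D1_def by (rule power_mult_tendsto_0_if_exp_bounded[OF d1])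
  have lim_E2: "((\<lambda>t. t ^ k * E2 t) \<longlongrightarrow> 0) at_top" for k
    unfolding E2_def by (rule power_mult_tendsto_0_if_exp_bounded[OF e2])
  have lim_D2: "((\<lambda>t. t ^ k * D2 t) \<longlongrightarrow> 0) at_top" for k
    unfolding D2_def by (rule power_mult_tendsto_0_if_exp_bounded[OF d2])
  have inv: "((\<lambda>t::real. 1 / t) \<longlongrightarrow> 0) at_top" "((\<lambda>t::real. 1 / t ^ 2) \<longlongrightarrow> 0) at_top"
    by real_asymp+
  have "((\<lambda>t. -3 + (t ^ 2 * D2 t - (1 / t ^ 2) * (t ^ 0 * E1 t) + (t ^ 0 * E1 t) * (t ^ 0 * D2 t)
      - 2 * (t ^ 1 * E2 t) - (1 / t) * (t ^ 0 * D1 t) - (t ^ 0 * D1 t) * (t ^ 0 * E2 t)))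
      \<longlongrightarrow> -3 + (0 - 0 * 0 + 0 * 0 - 2 * 0 - 0 * 0 - 0 * 0)) at_top"
    by (intro tendsto_intros lim_E1 lim_D1 lim_E2 lim_D2 inv)
  moreover have "\<forall>\<^sub>F t in at_top. -3 + (t ^ 2 * D2 t - (1 / t ^ 2) * (t ^ 0 * E1 t)
      + (t ^ 0 * E1 t) * (t ^ 0 * D2 t) - 2 * (t ^ 1 * E2 t) - (1 / t) * (t ^ 0 * D1 t)
      - (t ^ 0 * D1 t) * (t ^ 0 * E2 t)) = y1 t * y2' t - y1' t * y2 t"
    using eventually_ge_at_top[of 1]
    by eventually_elim (simp add: E1_def D1_def E2_def D2_def field_simps power2_eq_square)
  ultimately show ?thesis by (simp add: tendsto_cong)
qed

inductive_set fun_algebra :: "(real \<Rightarrow> real) set \<Rightarrow> (real \<Rightarrow> real) set" for G where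
  gen: "g \<in> G \<Longrightarrow> g \<in> fun_algebra G"
| const: "(\<lambda>t. c) \<in> fun_algebra G"
| add: "f \<in> fun_algebra G \<Longrightarrow> g \<in> fun_algebra G \<Longrightarrow> (\<lambda>t. f t + g t) \<in> fun_algebra G"
| mult: "f \<in> fun_algebra G \<Longrightarrow> g \<in> fun_algebra G \<Longrightarrow> (\<lambda>t. f t * g t) \<in> fun_algebra G"

lemma fun_algebra_mono: "f \<in> fun_algebra G \<Longrightarrow> G \<subseteq> H \<Longrightarrow> f \<in> fun_algebra H"
  by (induction rule: fun_algebra.induct) (auto intro: fun_algebra.intros)

lemma fun_algebra_diff:
  assumes "f \<in> fun_algebra G" "g \<in> fun_algebra G"
  shows "(\<lambda>t. f t - g t) \<in> fun_algebra G"
proof -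
  have "(\<lambda>t. f t + (- 1) * g t) \<in> fun_algebra G"
    by (intro fun_algebra.intros assms)
  then show ?thesis by simp
qed

lemma power2_in_fun_algebra:
  assumes "(\<lambda>t. t) \<in> G"
  shows "(\<lambda>t. t ^ 2) \<in> fun_algebra G"
proof -
  have "(\<lambda>t. t * t) \<in> fun_algebra G"
    by (rule fun_algebra.mult; rule fun_algebra.gen; rule assms)
  then show ?thesis by (simp add: power2_eq_square)
qed

definition derivative_closed :: "real set \<Rightarrow> (real \<Rightarrow> real) set \<Rightarrow> bool" where
  "derivative_closed X G \<longleftrightarrow>
     (\<forall>g\<in>G. \<exists>g'\<in>fun_algebra G. \<forall>t\<in>X. (g has_real_derivative g' t) (at t within X))"

lemma derivative_closed_fun_algebra:
  assumes closed: "derivative_closed X G" and "f \<in> fun_algebra G"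
  shows "\<exists>f'\<in>fun_algebra G. \<forall>t\<in>X. (f has_real_derivative f' t) (at t within X)"
  using assms(2)
proof induction
  case (gen g)
  then show ?case using closed by (auto simp: derivative_closed_def)
next
  case (const c)
  show ?case by (intro bexI[of _ "\<lambda>t. 0"] ballI fun_algebra.const DERIV_const)
next
  case (add f g)
  then obtain f' g' where "f' \<in> fun_algebra G" "\<forall>t\<in>X. (f has_real_derivative f' t) (at t within X)"
    and "g' \<in> fun_algebra G" "\<forall>t\<in>X. (g has_real_derivative g' t) (at t within X)"
    by blast
  then show ?case
    by (intro bexI[of _ "\<lambda>t. f' t + g' t"] ballI fun_algebra.add DERIV_add) auto
next
  case (mult f g)
  then obtain f' g' where "f' \<in> fun_algebra G" "\<forall>t\<in>X. (f has_real_derivative f' t) (at t within X)"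
    and "g' \<in> fun_algebra G" "\<forall>t\<in>X. (g has_real_derivative g' t) (at t within X)"
    by blast
  then show ?case
    by (intro bexI[of _ "\<lambda>t. f' t * g t + g' t * f t"] ballI fun_algebra.add fun_algebra.mult
        mult.hyps DERIV_mult) auto
qed

lemma smooth_on_real_if_derivatives_in:
  assumes "f \<in> S"
    and closed: "\<And>g. g \<in> S \<Longrightarrow> \<exists>g'\<in>S. \<forall>t\<in>X. (g has_real_derivative g' t) (at t within X)"
  shows "smooth_on_real X f"
proof -
  obtain d where d: "\<And>g. g \<in> S \<Longrightarrow> d g \<in> S \<and> (\<forall>t\<in>X. (g has_real_derivative d g t) (at t within X))"
    using closed by metis
  have "(d ^^ n) f \<in> S" for n
    by (induction n) (auto simp: assms(1) d)
  then show ?thesis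
    unfolding smooth_on_real_def using d by (intro exI[of _ "\<lambda>n. (d ^^ n) f"]) auto
qed

lemma smooth_on_real_fun_algebra:
  "derivative_closed X G \<Longrightarrow> f \<in> fun_algebra G \<Longrightarrow> smooth_on_real X f"
  by (rule smooth_on_real_if_derivatives_in[of f "fun_algebra G"])
     (auto intro: derivative_closed_fun_algebra)

lemma derivative_closed_insert_solution:
  assumes closed: "derivative_closed X G" and a: "a \<in> fun_algebra G"
    and y: "\<forall>t\<in>X. (y has_real_derivative y' t) (at t within X)"
    and y': "\<forall>t\<in>X. (y' has_real_derivative a t * y t) (at t within X)"
  shows "derivative_closed X (insert y (insert y' G))"
  unfolding derivative_closed_def
proof (intro ballI)
  let ?A = "fun_algebra (insert y (insert y' G))"
  fix g assume "g \<in> insert y (insert y' G)"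
  then consider "g = y" | "g = y'" | "g \<in> G" by blast
  then show "\<exists>g'\<in>?A. \<forall>t\<in>X. (g has_real_derivative g' t) (at t within X)"
  proof cases
    case 1
    then show ?thesis using y by (auto intro: fun_algebra.gen)
  next
    case 2
    have "(\<lambda>t. a t * y t) \<in> ?A"
      by (intro fun_algebra.mult fun_algebra_mono[OF a] fun_algebra.gen) auto
    with y' 2 show ?thesis by (intro bexI[of _ "\<lambda>t. a t * y t"]) simp_all
  next
    case 3
    then obtain g' where "g' \<in> fun_algebra G" "\<forall>t\<in>X. (g has_real_derivative g' t) (at t within X)"
      using closed by (auto simp: derivative_closed_def)
    moreover have "fun_algebra G \<subseteq> ?A" by (auto intro: fun_algebra_mono)
    ultimately show ?thesis by blast
  qed
qed

definition bielecki_weight :: "real \<Rightarrow> real \<Rightarrow> real" where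
  "bielecki_weight K s = exp (2 * K * exp (-s))"

lemma bielecki_weight_pos [simp]: "bielecki_weight K s > 0"
  unfolding bielecki_weight_def by simp

lemma bielecki_weight_ge_1: "K \<ge> 0 \<Longrightarrow> bielecki_weight K s \<ge> 1"
  unfolding bielecki_weight_def by simp

lemma bielecki_weight_le: "K \<ge> 0 \<Longrightarrow> s \<ge> 1 \<Longrightarrow> bielecki_weight K s \<le> bielecki_weight K 1"
  unfolding bielecki_weight_def by (simp add: mult_left_mono)

lemma continuous_on_bielecki_weight: "continuous_on S (bielecki_weight K)"
  unfolding bielecki_weight_def[abs_def] by (intro continuous_intros)

text \<open>\<open>-bielecki_weight K / 2\<close> is an antiderivative of the integrand; this is what makes
  the Volterra operator a contraction in the norm weighted by \<open>bielecki_weight\<close>.\<close>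
lemma has_integral_bielecki_weight:
  assumes "K \<ge> 0"
  shows "((\<lambda>s. K * N * bielecki_weight K s * exp (-s)) has_integral
           N * ((bielecki_weight K t - 1) / 2)) {t..}"
proof -
  have "((\<lambda>s. K * exp (-s) * bielecki_weight K s) has_integral (-1/2 - - bielecki_weight K t / 2)) {t..}"
  proof (rule has_integral_atLeast_if_antiderivative_tendsto)
    show "((\<lambda>s. - bielecki_weight K s / 2) has_real_derivative K * exp (-x) * bielecki_weight K x) (at x)"
      for x
      unfolding bielecki_weight_def by (auto intro!: derivative_eq_intros simp: field_simps)
    show "continuous_on {t..} (\<lambda>s. K * exp (-s) * bielecki_weight K s)"
      by (intro continuous_intros continuous_on_bielecki_weight)
    show "K * exp (-x) * bielecki_weight K x \<ge> 0" for x
      using assms by (simp add: bielecki_weight_def)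
    have "((\<lambda>s::real. exp (-s)) \<longlongrightarrow> 0) at_top" by real_asymp
    then have "((\<lambda>s. - exp (2 * K * exp (-s)) / 2) \<longlongrightarrow> - exp (2 * K * 0) / 2) at_top"
      by (intro tendsto_intros) auto
    then show "((\<lambda>s. - bielecki_weight K s / 2) \<longlongrightarrow> -1/2) at_top"
      by (simp add: bielecki_weight_def)
  qed
  from has_integral_mult_right[OF this, of N] show ?thesis
    by (simp add: algebra_simps diff_divide_distrib)
qed

definition weighted_lift :: "real \<Rightarrow> (real \<Rightarrow>\<^sub>C real) \<Rightarrow> real \<Rightarrow> real" where
  "weighted_lift K z s = s ^ 2 * bielecki_weight K s * apply_bcontfun z s"

lemma continuous_on_weighted_lift: "continuous_on S (weighted_lift K z)"
  unfolding weighted_lift_def[abs_def]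
  by (intro continuous_intros continuous_on_bielecki_weight) auto

lemma abs_weighted_lift_diff_le:
  "\<bar>weighted_lift K z s - weighted_lift K z' s\<bar> \<le> dist z z' * s ^ 2 * bielecki_weight K s"
proof -
  have "\<bar>weighted_lift K z s - weighted_lift K z' s\<bar>
      = s ^ 2 * bielecki_weight K s * dist (apply_bcontfun z s) (apply_bcontfun z' s)"
    by (simp add: weighted_lift_def dist_real_def abs_mult right_diff_distrib[symmetric] less_imp_le)
  also have "\<dots> \<le> s ^ 2 * bielecki_weight K s * dist z z'"
    by (intro mult_left_mono dist_bounded) (simp add: less_imp_le)
  finally show ?thesis by (simp add: algebra_simps)
qed

lemma abs_weighted_lift_le: "\<bar>weighted_lift K z s\<bar> \<le> norm z * s ^ 2 * bielecki_weight K s"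
  using abs_weighted_lift_diff_le[of K z s 0] by (simp add: weighted_lift_def dist_norm)

lemma abs_weighted_lift_le_quadratic:
  assumes "K \<ge> 0" "s \<ge> 1"
  shows "\<bar>weighted_lift K z s\<bar> \<le> (norm z * bielecki_weight K 1) * s ^ 2"
proof -
  have "\<bar>weighted_lift K z s\<bar> \<le> norm z * s ^ 2 * bielecki_weight K s"
    by (rule abs_weighted_lift_le)
  also have "\<dots> \<le> norm z * s ^ 2 * bielecki_weight K 1"
    using bielecki_weight_le[OF assms] by (intro mult_left_mono) auto
  finally show ?thesis by (simp add: algebra_simps)
qed

locale decaying_potential =
  fixes b :: "real \<Rightarrow> real" and B :: real
  assumes continuous_on_potential: "continuous_on {1..} b"
    and abs_potential_le: "\<And>s. s \<ge> 1 \<Longrightarrow> \<bar>b s\<bar> \<le> B * exp (-s) / s ^ 4"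
begin

lemma potential_constant_nonneg: "B \<ge> 0"
proof -
  have "0 \<le> B * exp (-1)" using abs_potential_le[of 1] by (simp add: order_trans[OF abs_ge_zero])
  then show ?thesis by (simp add: zero_le_mult_iff)
qed

definition tail_sq :: "(real \<Rightarrow> real) \<Rightarrow> real \<Rightarrow> real" where
  "tail_sq v t = integral {t..} (\<lambda>s. s ^ 2 * b s * v s)"

definition tail_inv :: "(real \<Rightarrow> real) \<Rightarrow> real \<Rightarrow> real" where
  "tail_inv v t = integral {t..} (\<lambda>s. b s * v s / s)"

text \<open>Variation of constants with the solutions \<open>t\<^sup>2\<close> and \<open>1/t\<close> of \<open>y'' = 2 y / t\<^sup>2\<close>
  (Wronskian \<open>-3\<close>): \<open>volterra v t\<close> is the integral of \<open>(s\<^sup>2/t - t\<^sup>2/s) b(s) v(s) / 3\<close>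
  over \<open>[t, \<infinity>)\<close>.\<close>
definition volterra :: "(real \<Rightarrow> real) \<Rightarrow> real \<Rightarrow> real" where
  "volterra v t = tail_sq v t / (3 * t) - t ^ 2 * tail_inv v t / 3"

definition volterra_deriv :: "(real \<Rightarrow> real) \<Rightarrow> real \<Rightarrow> real" where
  "volterra_deriv v t = - tail_sq v t / (3 * t ^ 2) - 2 * t * tail_inv v t / 3"

lemma abs_mult_potential_le:
  assumes s: "s \<ge> 1" and c: "\<bar>c\<bar> \<le> \<kappa> * s ^ 2" and x: "\<bar>x\<bar> \<le> N * s ^ 2 * F"
  shows "\<bar>c * b s * x\<bar> \<le> \<kappa> * (B * N * F * exp (-s))"
proof -
  have "0 \<le> \<kappa> * s ^ 2" "0 \<le> B * exp (-s) / s ^ 4"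
    using c abs_potential_le[OF s] by (auto intro: order_trans[OF abs_ge_zero])
  then have cb: "\<bar>c\<bar> * \<bar>b s\<bar> \<le> (\<kappa> * s ^ 2) * (B * exp (-s) / s ^ 4)"
    using c abs_potential_le[OF s] by (intro mult_mono) auto
  have "\<bar>c * b s * x\<bar> \<le> (\<kappa> * s ^ 2) * (B * exp (-s) / s ^ 4) * (N * s ^ 2 * F)"
    unfolding abs_mult using mult_nonneg_nonneg[OF \<open>0 \<le> \<kappa> * s ^ 2\<close> \<open>0 \<le> B * exp (-s) / s ^ 4\<close>]
    by (intro mult_mono[OF cb x]) simp_all
  also have "\<dots> = \<kappa> * (B * N * F * exp (-s))"
    using s by (simp add: field_simps power2_eq_square power4_eq_xxxx)
  finally show ?thesis .
qed

lemma abs_integral_potential_le: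
  fixes c v F :: "real \<Rightarrow> real"
  assumes t: "t \<ge> 1" and c: "continuous_on {t..} c" "\<And>s. s \<ge> t \<Longrightarrow> \<bar>c s\<bar> \<le> \<kappa> * s ^ 2"
    and v: "continuous_on {1..} v" "\<And>s. s \<ge> 1 \<Longrightarrow> \<bar>v s\<bar> \<le> N * s ^ 2 * F s"
    and I: "((\<lambda>s. B * N * F s * exp (-s)) has_integral I) {t..}"
  shows "\<bar>integral {t..} (\<lambda>s. c s * b s * v s)\<bar> \<le> \<kappa> * I"
proof (rule abs_integral_atLeast_le)
  show "continuous_on {t..} (\<lambda>s. c s * b s * v s)"
    using t by (intro continuous_intros c continuous_on_subset[OF continuous_on_potential]
        continuous_on_subset[OF v(1)]) auto
  show "((\<lambda>s. \<kappa> * (B * N * F s * exp (-s))) has_integral \<kappa> * I) {t..}"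
    using has_integral_mult_right[OF I] .
  show "\<bar>c s * b s * v s\<bar> \<le> \<kappa> * (B * N * F s * exp (-s))" if "s \<ge> t" for s
    using that t by (intro abs_mult_potential_le c v) auto
qed

lemma abs_volterra_le:
  assumes t: "t \<ge> 1"
    and v: "continuous_on {1..} v" "\<And>s. s \<ge> 1 \<Longrightarrow> \<bar>v s\<bar> \<le> N * s ^ 2 * F s"
    and I: "((\<lambda>s. B * N * F s * exp (-s)) has_integral I) {t..}"
  shows "\<bar>volterra v t\<bar> \<le> 2 * I / 3"
proof -
  have "tail_sq v t / (3 * t) = integral {t..} (\<lambda>s. (s ^ 2 / (3 * t)) * b s * v s)"
    unfolding tail_sq_def by (simp flip: integral_divide)
  also have "\<bar>\<dots>\<bar> \<le> (1/3) * I"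
  proof (rule abs_integral_potential_le[OF t _ _ v I])
    show "\<bar>s ^ 2 / (3 * t)\<bar> \<le> 1 / 3 * s ^ 2" if "s \<ge> t" for s
      using that t by (simp add: abs_div field_simps)
  qed (use t in \<open>auto intro!: continuous_intros\<close>)
  finally have sq: "\<bar>tail_sq v t / (3 * t)\<bar> \<le> (1/3) * I" .
  have "t ^ 2 * tail_inv v t / 3 = (t ^ 2 / 3) * tail_inv v t" by simp
  also have "\<dots> = integral {t..} (\<lambda>s. (t ^ 2 / 3) * (b s * v s / s))"
    unfolding tail_inv_def by (rule integral_mult_right[symmetric])
  also have "\<dots> = integral {t..} (\<lambda>s. (t ^ 2 / (3 * s)) * b s * v s)"
    by (rule integral_cong) simp
  also have "\<bar>\<dots>\<bar> \<le> (1/3) * I"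
  proof (rule abs_integral_potential_le[OF t _ _ v I])
    show "\<bar>t ^ 2 / (3 * s)\<bar> \<le> 1 / 3 * s ^ 2" if "s \<ge> t" for s
    proof -
      have "t ^ 2 \<le> s ^ 2" using that t by (intro power_mono) auto
      also have "\<dots> \<le> s * s ^ 2" using that t by (simp add: mult_le_cancel_right1)
      finally show ?thesis using that t by (simp add: abs_div field_simps)
    qed
  qed (use t in \<open>auto intro!: continuous_intros\<close>)
  finally have inv: "\<bar>t ^ 2 * tail_inv v t / 3\<bar> \<le> (1/3) * I" .
  show ?thesis
    unfolding volterra_def
    using abs_triangle_ineq4[of "tail_sq v t / (3 * t)" "t ^ 2 * tail_inv v t / 3"] sq inv
    by linarith
qed

context
  fixes v :: "real \<Rightarrow> real" and N :: real
  assumes continuous_v: "continuous_on {1..} v"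
    and abs_v_le: "\<And>s. s \<ge> 1 \<Longrightarrow> \<bar>v s\<bar> \<le> N * s ^ 2"
begin

lemma growth_constant_nonneg: "N \<ge> 0"
  using abs_ge_zero[of "v 1"] abs_v_le[of 1] by simp

lemma abs_tail_sq_integrand_le: "s \<ge> 1 \<Longrightarrow> \<bar>s ^ 2 * b s * v s\<bar> \<le> B * N * exp (-s)"
  using abs_mult_potential_le[of s "s ^ 2" 1 "v s" N 1] abs_v_le[of s] by simp

lemma abs_tail_inv_integrand_le:
  assumes s: "s \<ge> 1"
  shows "\<bar>b s * v s / s\<bar> \<le> B * N * exp (-s)"
proof -
  have "\<bar>1 / s\<bar> \<le> 1" "1 \<le> s ^ 2" using s by simp_all
  then have "\<bar>1 / s\<bar> \<le> 1 * s ^ 2" by simp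
  from abs_mult_potential_le[OF s this, of "v s" N 1] abs_v_le[OF s] show ?thesis
    by simp
qed

lemma continuous_on_tail_sq_integrand: "continuous_on {1..} (\<lambda>s. s ^ 2 * b s * v s)"
  by (intro continuous_intros continuous_on_potential continuous_v)

lemma continuous_on_tail_inv_integrand: "continuous_on {1..} (\<lambda>s. b s * v s / s)"
  by (intro continuous_intros continuous_on_potential continuous_v) auto

lemma has_real_derivative_tail_sq:
  "t \<ge> 1 \<Longrightarrow> (tail_sq v has_real_derivative - (t ^ 2 * b t * v t)) (at t within {1..})"
  unfolding tail_sq_def[abs_def]
  by (rule has_real_derivative_integral_atLeast[OF continuous_on_tail_sq_integrand
        abs_tail_sq_integrand_le])

lemma has_real_derivative_tail_inv:
  "t \<ge> 1 \<Longrightarrow> (tail_inv v has_real_derivative - (b t * v t / t)) (at t within {1..})"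
  unfolding tail_inv_def[abs_def]
  by (rule has_real_derivative_integral_atLeast[OF continuous_on_tail_inv_integrand
        abs_tail_inv_integrand_le])

lemma has_real_derivative_volterra:
  "t \<ge> 1 \<Longrightarrow> (volterra v has_real_derivative volterra_deriv v t) (at t within {1..})"
  unfolding volterra_def[abs_def] volterra_deriv_def
  by (auto intro!: derivative_eq_intros has_real_derivative_tail_sq has_real_derivative_tail_inv
      simp: field_simps power2_eq_square)

lemma has_real_derivative_volterra_deriv:
  "t \<ge> 1 \<Longrightarrow> (volterra_deriv v has_real_derivative 2 / t ^ 2 * volterra v t + b t * v t)
    (at t within {1..})"
  unfolding volterra_deriv_def[abs_def] volterra_def
  by (auto intro!: derivative_eq_intros has_real_derivative_tail_sq has_real_derivative_tail_inv
      simp: field_simps power2_eq_square)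

lemma continuous_on_volterra: "continuous_on {1..} (volterra v)"
  by (rule DERIV_continuous_on[OF has_real_derivative_volterra]) auto

lemma abs_volterra_le_exp:
  assumes t: "t \<ge> 1"
  shows "\<bar>volterra v t\<bar> \<le> B * N * exp (-t)"
proof -
  have "\<bar>volterra v t\<bar> \<le> 2 * (B * N * exp (-t)) / 3"
    using has_integral_exp_minus_atLeast[of "B * N" t]
    by (intro abs_volterra_le[OF t continuous_v, where F = "\<lambda>_. 1"]) (simp_all add: abs_v_le)
  then show ?thesis using potential_constant_nonneg growth_constant_nonneg by simp
qed

lemma abs_volterra_deriv_le:
  assumes t: "t \<ge> 1"
  shows "\<bar>volterra_deriv v t\<bar> \<le> B * N * exp (-t)"
proof -
  have I: "((\<lambda>s. B * N * 1 * exp (-s)) has_integral B * N * exp (-t)) {t..}"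
    using has_integral_exp_minus_atLeast[of "B * N" t] by simp
  have v: "\<bar>v s\<bar> \<le> N * s ^ 2 * 1" if "s \<ge> 1" for s
    using abs_v_le[OF that] by simp
  have "\<bar>tail_sq v t\<bar> \<le> 1 * (B * N * exp (-t))"
    unfolding tail_sq_def
  proof (rule abs_integral_potential_le[OF t _ _ continuous_v v I])
    show "continuous_on {t..} (\<lambda>s. s ^ 2)" by (intro continuous_intros)
  qed simp
  moreover have "0 \<le> B * N * exp (-t)"
    using potential_constant_nonneg growth_constant_nonneg by simp
  then have "B * N * exp (-t) \<le> B * N * exp (-t) * t ^ 2"
    using t by (simp add: mult_le_cancel_left1)
  ultimately have sq: "\<bar>tail_sq v t\<bar> / (3 * t ^ 2) \<le> B * N * exp (-t) / 3"
    using t by (simp add: divide_le_eq)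
  have "t * tail_inv v t = integral {t..} (\<lambda>s. t * (b s * v s / s))"
    unfolding tail_inv_def by (rule integral_mult_right[symmetric])
  also have "\<dots> = integral {t..} (\<lambda>s. (t / s) * b s * v s)"
    by (rule integral_cong) simp
  also have "\<bar>\<dots>\<bar> \<le> 1 * (B * N * exp (-t))"
  proof (rule abs_integral_potential_le[OF t _ _ continuous_v v I])
    show "continuous_on {t..} (\<lambda>s. t / s)" using t by (intro continuous_intros) auto
    show "\<bar>t / s\<bar> \<le> 1 * s ^ 2" if "s \<ge> t" for s
    proof -
      have "\<bar>t / s\<bar> \<le> 1" "1 \<le> s ^ 2" using that t by simp_all
      then show ?thesis by simp
    qed
  qed
  finally have inv: "\<bar>t * tail_inv v t\<bar> \<le> B * N * exp (-t)" by simp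
  have "volterra_deriv v t = - (tail_sq v t / (3 * t ^ 2)) - 2 * (t * tail_inv v t) / 3"
    by (simp add: volterra_deriv_def)
  then have "\<bar>volterra_deriv v t\<bar> \<le> \<bar>tail_sq v t / (3 * t ^ 2)\<bar> + 2 * \<bar>t * tail_inv v t\<bar> / 3"
    by arith
  also have "\<bar>tail_sq v t / (3 * t ^ 2)\<bar> = \<bar>tail_sq v t\<bar> / (3 * t ^ 2)"
    by (simp add: abs_div)
  finally have "\<bar>volterra_deriv v t\<bar> \<le> \<bar>tail_sq v t\<bar> / (3 * t ^ 2) + 2 * \<bar>t * tail_inv v t\<bar> / 3" .
  then show ?thesis using sq inv by linarith
qed

end

lemma volterra_diff:
  assumes "continuous_on {1..} v" "\<And>s. s \<ge> 1 \<Longrightarrow> \<bar>v s\<bar> \<le> N * s ^ 2"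
    and "continuous_on {1..} w" "\<And>s. s \<ge> 1 \<Longrightarrow> \<bar>w s\<bar> \<le> M * s ^ 2"
    and t: "t \<ge> 1"
  shows "volterra (\<lambda>s. v s - w s) t = volterra v t - volterra w t"
proof -
  have integrable: "(\<lambda>s. s ^ 2 * b s * u s) integrable_on {t..}" "(\<lambda>s. b s * u s / s) integrable_on {t..}"
    if "continuous_on {1..} u" "\<And>s. s \<ge> 1 \<Longrightarrow> \<bar>u s\<bar> \<le> K * s ^ 2" for u K
    using t continuous_on_tail_sq_integrand[OF that] abs_tail_sq_integrand_le[OF that]
      continuous_on_tail_inv_integrand[OF that] abs_tail_inv_integrand_le[OF that]
    by (auto intro!: integrable_on_atLeast_if_exp_bound[where C = "B * K"]
        intro: continuous_on_subset)
  have sq: "tail_sq (\<lambda>s. v s - w s) t = tail_sq v t - tail_sq w t"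
  proof -
    have "tail_sq (\<lambda>s. v s - w s) t = integral {t..} (\<lambda>s. s ^ 2 * b s * v s - s ^ 2 * b s * w s)"
      unfolding tail_sq_def by (rule integral_cong) (simp add: algebra_simps)
    also have "\<dots> = tail_sq v t - tail_sq w t"
      unfolding tail_sq_def
      by (rule integral_diff[OF integrable(1)[OF assms(1,2)] integrable(1)[OF assms(3,4)]])
    finally show ?thesis .
  qed
  have inv: "tail_inv (\<lambda>s. v s - w s) t = tail_inv v t - tail_inv w t"
  proof -
    have "tail_inv (\<lambda>s. v s - w s) t = integral {t..} (\<lambda>s. b s * v s / s - b s * w s / s)"
      unfolding tail_inv_def by (rule integral_cong) (simp add: algebra_simps diff_divide_distrib)
    also have "\<dots> = tail_inv v t - tail_inv w t"
      unfolding tail_inv_def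
      by (rule integral_diff[OF integrable(2)[OF assms(1,2)] integrable(2)[OF assms(3,4)]])
    finally show ?thesis .
  qed
  show ?thesis unfolding volterra_def sq inv by (simp add: algebra_simps diff_divide_distrib)
qed

lemma abs_volterra_le_weight:
  assumes t: "t \<ge> 1" and v: "continuous_on {1..} v"
    and v_le: "\<And>s. s \<ge> 1 \<Longrightarrow> \<bar>v s\<bar> \<le> N * s ^ 2 * bielecki_weight B s"
  shows "\<bar>volterra v t\<bar> \<le> N * (t ^ 2 * bielecki_weight B t) / 3"
proof -
  have "\<bar>volterra v t\<bar> \<le> 2 * (N * ((bielecki_weight B t - 1) / 2)) / 3"
    by (rule abs_volterra_le[OF t v v_le has_integral_bielecki_weight[OF potential_constant_nonneg]])
  also have "\<dots> \<le> N * (t ^ 2 * bielecki_weight B t) / 3"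
  proof -
    have "N \<ge> 0"
      using order_trans[OF abs_ge_zero v_le[of 1]] bielecki_weight_ge_1[OF potential_constant_nonneg, of 1]
      by (auto simp: zero_le_mult_iff)
    moreover have "bielecki_weight B t - 1 \<le> t ^ 2 * bielecki_weight B t"
    proof -
      have "bielecki_weight B t \<le> t ^ 2 * bielecki_weight B t"
        using bielecki_weight_ge_1[OF potential_constant_nonneg, of t] t
        by (simp add: mult_le_cancel_right1)
      then show ?thesis by linarith
    qed
    ultimately show ?thesis by (simp add: mult_left_mono)
  qed
  finally show ?thesis .
qed

lemma abs_volterra_weighted_lift_diff_le:
  assumes t: "t \<ge> 1"
  shows "\<bar>volterra (weighted_lift B z) t - volterra (weighted_lift B z') t\<bar>
    \<le> dist z z' * (t ^ 2 * bielecki_weight B t) / 3"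
proof -
  note B = potential_constant_nonneg
  have "volterra (weighted_lift B z) t - volterra (weighted_lift B z') t
      = volterra (\<lambda>s. weighted_lift B z s - weighted_lift B z' s) t"
    using abs_weighted_lift_le_quadratic[OF B]
    by (intro volterra_diff[OF continuous_on_weighted_lift _ continuous_on_weighted_lift _ t, symmetric])
  also have "\<bar>\<dots>\<bar> \<le> dist z z' * (t ^ 2 * bielecki_weight B t) / 3"
    by (rule abs_volterra_le_weight[OF t continuous_on_diff[OF continuous_on_weighted_lift
          continuous_on_weighted_lift] abs_weighted_lift_diff_le])
  finally show ?thesis .
qed

text \<open>Banach's fixed point theorem for \<open>z \<mapsto> (\<phi> + volterra (W z)) / W\<close> on bounded continuous
  functions, where \<open>W s = s\<^sup>2 bielecki_weight B s\<close>: by \<open>abs_volterra_le_weight\<close> it is a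
  contraction with constant \<open>1/3\<close>.\<close>
lemma volterra_fixed_point:
  assumes \<phi>: "continuous_on {1..} \<phi>" "\<And>t. t \<ge> 1 \<Longrightarrow> \<bar>\<phi> t\<bar> \<le> t ^ 2"
  obtains y N where "continuous_on {1..} y" "\<And>s. s \<ge> 1 \<Longrightarrow> \<bar>y s\<bar> \<le> N * s ^ 2"
    "\<And>t. t \<ge> 1 \<Longrightarrow> y t = \<phi> t + volterra y t"
proof -
  note B = potential_constant_nonneg
  define W where "W s = s ^ 2 * bielecki_weight B s" for s
  have W: "W s \<ge> s ^ 2" "W s > 0" if "s \<ge> 1" for s
    using bielecki_weight_ge_1[OF B, of s] that by (simp_all add: W_def mult_le_cancel_left1)
  have W_cont: "continuous_on {1..} W"
    unfolding W_def[abs_def] by (intro continuous_intros continuous_on_bielecki_weight)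
  define G where "G z t = (\<phi> t + volterra (weighted_lift B z) t) / W t" for z t
  have G_le: "\<bar>G z t\<bar> \<le> 1 + norm z / 3" if t: "t \<ge> 1" for z t
  proof -
    have "\<bar>volterra (weighted_lift B z) t\<bar> \<le> norm z * W t / 3"
      using abs_volterra_le_weight[OF t continuous_on_weighted_lift abs_weighted_lift_le]
      by (simp add: W_def)
    then have "\<bar>\<phi> t + volterra (weighted_lift B z) t\<bar> \<le> (1 + norm z / 3) * W t"
      using \<phi>(2)[OF t] W[OF t] by (simp add: algebra_simps)
    then show ?thesis using W[OF t] by (simp add: G_def abs_div divide_le_eq)
  qed
  have G_cont: "continuous_on {1..} (G z)" for z
    unfolding G_def[abs_def] using W(2)
    by (intro continuous_intros \<phi>(1) W_cont continuous_on_volterra[OF continuous_on_weighted_lift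
        abs_weighted_lift_le_quadratic[OF B]]) (auto simp: less_imp_neq[symmetric])
  have G_bcontfun: "(\<lambda>t. G z (max t 1)) \<in> bcontfun" for z
  proof (rule bcontfun_normI)
    show "continuous_on UNIV (\<lambda>t. G z (max t 1))"
      by (rule continuous_on_compose2[OF G_cont]) (auto intro: continuous_intros)
    show "norm (G z (max t 1)) \<le> 1 + norm z / 3" for t using G_le[of "max t 1" z] by simp
  qed
  define \<Phi> where "\<Phi> z = Bcontfun (\<lambda>t. G z (max t 1))" for z
  have \<Phi>_apply: "apply_bcontfun (\<Phi> z) t = G z (max t 1)" for z t
    unfolding \<Phi>_def using G_bcontfun[of z] by (simp add: Bcontfun_inverse)
  have "dist (\<Phi> z) (\<Phi> z') \<le> 1/3 * dist z z'" for z z'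
  proof (rule dist_bound)
    fix x :: real
    define t where "t = max x 1"
    have t: "t \<ge> 1" by (simp add: t_def)
    from abs_volterra_weighted_lift_diff_le[OF t, of z z'] W(2)[OF t, unfolded W_def]
    show "dist (apply_bcontfun (\<Phi> z) x) (apply_bcontfun (\<Phi> z') x) \<le> 1/3 * dist z z'"
      unfolding \<Phi>_apply t_def[symmetric] dist_real_def G_def W_def
      by (simp add: diff_divide_distrib[symmetric] abs_div divide_le_eq)
  qed
  then obtain z where z: "\<Phi> z = z"
    using banach_fix_type[of "1/3" \<Phi>] by auto
  show ?thesis
  proof (rule that[OF continuous_on_weighted_lift[of _ B z] abs_weighted_lift_le_quadratic[OF B, of _ z]])
    fix t :: real assume t: "t \<ge> 1"
    have "apply_bcontfun z t = G z t" using \<Phi>_apply[of z t] t z by simp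
    then have "W t * apply_bcontfun z t = \<phi> t + volterra (weighted_lift B z) t"
      using W(2)[OF t] by (simp add: G_def)
    then show "weighted_lift B z t = \<phi> t + volterra (weighted_lift B z) t"
      by (simp add: weighted_lift_def W_def)
  qed
qed

lemma volterra_solution_ode:
  assumes y: "continuous_on {1..} y" "\<And>s. s \<ge> 1 \<Longrightarrow> \<bar>y s\<bar> \<le> N * s ^ 2"
    and y_eq: "\<And>t. t \<ge> 1 \<Longrightarrow> y t = \<phi> t + volterra y t"
    and d\<phi>: "\<And>t. t \<ge> 1 \<Longrightarrow> (\<phi> has_real_derivative \<phi>' t) (at t within {1..})"
    and d\<phi>': "\<And>t. t \<ge> 1 \<Longrightarrow> (\<phi>' has_real_derivative 2 / t ^ 2 * \<phi> t) (at t within {1..})"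
    and t: "t \<ge> 1"
  shows "(y has_real_derivative \<phi>' t + volterra_deriv y t) (at t within {1..})"
    and "((\<lambda>t. \<phi>' t + volterra_deriv y t) has_real_derivative (2 / t ^ 2 + b t) * y t)
           (at t within {1..})"
proof -
  have "((\<lambda>t. \<phi> t + volterra y t) has_real_derivative \<phi>' t + volterra_deriv y t) (at t within {1..})"
    by (rule DERIV_add[OF d\<phi>[OF t] has_real_derivative_volterra[OF y t]])
  moreover have "t \<in> {1..}" using t by simp
  moreover have "\<And>x. x \<in> {1..} \<Longrightarrow> dist x t < 1 \<Longrightarrow> \<phi> x + volterra y x = y x"
    using y_eq by simp
  ultimately show "(y has_real_derivative \<phi>' t + volterra_deriv y t) (at t within {1..})"
    by (rule has_field_derivative_transform_within[OF _ zero_less_one])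
  have "((\<lambda>t. \<phi>' t + volterra_deriv y t) has_real_derivative
      2 / t ^ 2 * \<phi> t + (2 / t ^ 2 * volterra y t + b t * y t)) (at t within {1..})"
    by (rule DERIV_add[OF d\<phi>'[OF t] has_real_derivative_volterra_deriv[OF y t]])
  moreover have "2 / t ^ 2 * \<phi> t + (2 / t ^ 2 * volterra y t + b t * y t) = (2 / t ^ 2 + b t) * y t"
    using y_eq[OF t] by (simp add: algebra_simps add_divide_distrib)
  ultimately show "((\<lambda>t. \<phi>' t + volterra_deriv y t) has_real_derivative (2 / t ^ 2 + b t) * y t)
      (at t within {1..})"
    by simp
qed

lemma exists_solution_near:
  assumes d\<phi>: "\<And>t. t \<ge> 1 \<Longrightarrow> (\<phi> has_real_derivative \<phi>' t) (at t within {1..})"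
    and d\<phi>': "\<And>t. t \<ge> 1 \<Longrightarrow> (\<phi>' has_real_derivative 2 / t ^ 2 * \<phi> t) (at t within {1..})"
    and \<phi>_le: "\<And>t. t \<ge> 1 \<Longrightarrow> \<bar>\<phi> t\<bar> \<le> t ^ 2"
  obtains y y' C where
    "\<And>t. t \<ge> 1 \<Longrightarrow> (y has_real_derivative y' t) (at t within {1..})"
    "\<And>t. t \<ge> 1 \<Longrightarrow> (y' has_real_derivative (2 / t ^ 2 + b t) * y t) (at t within {1..})"
    "\<And>t. t \<ge> 1 \<Longrightarrow> \<bar>y t - \<phi> t\<bar> \<le> C * exp (-t)"
    "\<And>t. t \<ge> 1 \<Longrightarrow> \<bar>y' t - \<phi>' t\<bar> \<le> C * exp (-t)"
proof -
  have "continuous_on {1..} \<phi>" by (rule DERIV_continuous_on[OF d\<phi>]) auto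
  then obtain y N where y: "continuous_on {1..} y" "\<And>s. s \<ge> 1 \<Longrightarrow> \<bar>y s\<bar> \<le> N * s ^ 2"
    and y_eq: "\<And>t. t \<ge> 1 \<Longrightarrow> y t = \<phi> t + volterra y t"
    using volterra_fixed_point \<phi>_le by blast
  show ?thesis
  proof (rule that[of y "\<lambda>t. \<phi>' t + volterra_deriv y t" "B * N"])
    fix t :: real assume t: "t \<ge> 1"
    show "(y has_real_derivative \<phi>' t + volterra_deriv y t) (at t within {1..})"
      "((\<lambda>t. \<phi>' t + volterra_deriv y t) has_real_derivative (2 / t ^ 2 + b t) * y t)
         (at t within {1..})"
      using volterra_solution_ode[OF y y_eq d\<phi> d\<phi>' t] by blast+
    show "\<bar>y t - \<phi> t\<bar> \<le> B * N * exp (-t)"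
      using abs_volterra_le_exp[OF y t] y_eq[OF t] by simp
    show "\<bar>\<phi>' t + volterra_deriv y t - \<phi>' t\<bar> \<le> B * N * exp (-t)"
      using abs_volterra_deriv_le[OF y t] by simp
  qed
qed

lemma exists_solution_near_square:
  obtains y y' C where
    "\<And>t. t \<ge> 1 \<Longrightarrow> (y has_real_derivative y' t) (at t within {1..})"
    "\<And>t. t \<ge> 1 \<Longrightarrow> (y' has_real_derivative (2 / t ^ 2 + b t) * y t) (at t within {1..})"
    "\<And>t. t \<ge> 1 \<Longrightarrow> \<bar>y t - t ^ 2\<bar> \<le> C * exp (-t)"
    "\<And>t. t \<ge> 1 \<Longrightarrow> \<bar>y' t - 2 * t\<bar> \<le> C * exp (-t)"
proof -
  have "((\<lambda>t. t ^ 2) has_real_derivative 2 * t) (at t within {1..})"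
    "((\<lambda>t. 2 * t) has_real_derivative 2 / t ^ 2 * t ^ 2) (at t within {1..})"
    "\<bar>t ^ 2\<bar> \<le> t ^ 2" if "t \<ge> 1" for t :: real
    using that by (auto intro!: derivative_eq_intros)
  then show ?thesis
    using exists_solution_near[of "\<lambda>t. t ^ 2" "\<lambda>t. 2 * t"] that by blast
qed

lemma exists_solution_near_inverse:
  obtains y y' C where
    "\<And>t. t \<ge> 1 \<Longrightarrow> (y has_real_derivative y' t) (at t within {1..})"
    "\<And>t. t \<ge> 1 \<Longrightarrow> (y' has_real_derivative (2 / t ^ 2 + b t) * y t) (at t within {1..})"
    "\<And>t. t \<ge> 1 \<Longrightarrow> \<bar>y t - 1 / t\<bar> \<le> C * exp (-t)"
    "\<And>t. t \<ge> 1 \<Longrightarrow> \<bar>y' t - - (1 / t ^ 2)\<bar> \<le> C * exp (-t)"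
proof -
  have "((\<lambda>t. 1 / t) has_real_derivative - (1 / t ^ 2)) (at t within {1..})"
    "((\<lambda>t. - (1 / t ^ 2)) has_real_derivative 2 / t ^ 2 * (1 / t)) (at t within {1..})"
    "\<bar>1 / t\<bar> \<le> t ^ 2" if "t \<ge> 1" for t :: real
  proof -
    show "((\<lambda>t. 1 / t) has_real_derivative - (1 / t ^ 2)) (at t within {1..})"
      "((\<lambda>t. - (1 / t ^ 2)) has_real_derivative 2 / t ^ 2 * (1 / t)) (at t within {1..})"
      using that by (auto intro!: derivative_eq_intros simp: field_simps power2_eq_square)
    have "\<bar>1 / t\<bar> \<le> 1" "1 \<le> t ^ 2" using that by simp_all
    then show "\<bar>1 / t\<bar> \<le> t ^ 2" by linarith
  qed
  then show ?thesis
    using exists_solution_near[of "\<lambda>t. 1 / t" "\<lambda>t. - (1 / t ^ 2)"] that by blast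
qed

lemma exists_fundamental_solutions:
  obtains y1 y1' y2 y2' C where
    "\<And>t. t \<ge> 1 \<Longrightarrow> (y1 has_real_derivative y1' t) (at t within {1..})"
    "\<And>t. t \<ge> 1 \<Longrightarrow> (y1' has_real_derivative (2 / t ^ 2 + b t) * y1 t) (at t within {1..})"
    "\<And>t. t \<ge> 1 \<Longrightarrow> (y2 has_real_derivative y2' t) (at t within {1..})"
    "\<And>t. t \<ge> 1 \<Longrightarrow> (y2' has_real_derivative (2 / t ^ 2 + b t) * y2 t) (at t within {1..})"
    "\<And>t. t \<ge> 1 \<Longrightarrow> \<bar>y1 t - t ^ 2\<bar> \<le> C * exp (-t)"
    "\<And>t. t \<ge> 1 \<Longrightarrow> \<bar>y2 t - 1 / t\<bar> \<le> C * exp (-t)"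
    "\<And>F F'. (\<And>t. t \<ge> 1 \<Longrightarrow> (F has_real_derivative F' t) (at t within {1..})) \<Longrightarrow>
      (\<And>t. t \<ge> 1 \<Longrightarrow> (F' has_real_derivative (2 / t ^ 2 + b t) * F t) (at t within {1..})) \<Longrightarrow>
      \<exists>c1 c2. \<forall>t\<ge>1. F t = c1 * y1 t + c2 * y2 t"
proof -
  obtain y1 y1' C1 where y1: "\<And>t. t \<ge> 1 \<Longrightarrow> (y1 has_real_derivative y1' t) (at t within {1..})"
      "\<And>t. t \<ge> 1 \<Longrightarrow> (y1' has_real_derivative (2 / t ^ 2 + b t) * y1 t) (at t within {1..})"
    and y1_near: "\<And>t. t \<ge> 1 \<Longrightarrow> \<bar>y1 t - t ^ 2\<bar> \<le> C1 * exp (-t)"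
      "\<And>t. t \<ge> 1 \<Longrightarrow> \<bar>y1' t - 2 * t\<bar> \<le> C1 * exp (-t)"
    using exists_solution_near_square by blast
  obtain y2 y2' C2 where y2: "\<And>t. t \<ge> 1 \<Longrightarrow> (y2 has_real_derivative y2' t) (at t within {1..})"
      "\<And>t. t \<ge> 1 \<Longrightarrow> (y2' has_real_derivative (2 / t ^ 2 + b t) * y2 t) (at t within {1..})"
    and y2_near: "\<And>t. t \<ge> 1 \<Longrightarrow> \<bar>y2 t - 1 / t\<bar> \<le> C2 * exp (-t)"
      "\<And>t. t \<ge> 1 \<Longrightarrow> \<bar>y2' t - - (1 / t ^ 2)\<bar> \<le> C2 * exp (-t)"
    using exists_solution_near_inverse by blast
  obtain c where c: "\<And>t. t \<in> {1..} \<Longrightarrow> y1 t * y2' t - y1' t * y2 t = c"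
    using wronskian_constant[OF convex_real_interval(1), of 1 y1 y1' "\<lambda>t. 2 / t ^ 2 + b t" y2 y2']
      y1 y2 by auto
  have "\<bar>y2' t + 1 / t ^ 2\<bar> \<le> C2 * exp (-t)" if "t \<ge> 1" for t
    using y2_near(2)[OF that] by simp
  with y1_near y2_near(1) have "((\<lambda>t. y1 t * y2' t - y1' t * y2 t) \<longlongrightarrow> -3) at_top"
    by (intro wronskian_tendsto)
  moreover have "((\<lambda>t. y1 t * y2' t - y1' t * y2 t) \<longlongrightarrow> c) at_top"
    by (rule tendsto_eventually, use eventually_ge_at_top[of 1] in eventually_elim) (simp add: c)
  ultimately have "c = -3"
    using tendsto_unique[OF trivial_limit_at_top_linorder] by blast
  show ?thesis
  proof (rule that[of y1 y1' y2 y2' "max C1 C2"])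
    fix F F' assume "\<And>t. t \<ge> 1 \<Longrightarrow> (F has_real_derivative F' t) (at t within {1..})"
      "\<And>t. t \<ge> 1 \<Longrightarrow> (F' has_real_derivative (2 / t ^ 2 + b t) * F t) (at t within {1..})"
    with y1 y2 c \<open>c = -3\<close> have "\<exists>c1 c2. \<forall>t\<in>{1..}. F t = c1 * y1 t + c2 * y2 t"
      by (intro solution_in_span_if_wronskian_nonzero[OF convex_real_interval(1), of 1 y1 y1'
          "\<lambda>t. 2 / t ^ 2 + b t" y2 y2' F F' c]) auto
    then show "\<exists>c1 c2. \<forall>t\<ge>1. F t = c1 * y1 t + c2 * y2 t" by auto
  next
    fix t :: real assume t: "t \<ge> 1"
    show "\<bar>y1 t - t ^ 2\<bar> \<le> max C1 C2 * exp (-t)" "\<bar>y2 t - 1 / t\<bar> \<le> max C1 C2 * exp (-t)"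
      using y1_near(1)[OF t] y2_near(1)[OF t] by (auto intro: order_trans mult_right_mono)
  qed (use y1 y2 in auto)
qed

end

lemma ground_state_profile_pos: "ground_state_profile Q \<Longrightarrow> t \<ge> 0 \<Longrightarrow> Q t > 0"
  unfolding ground_state_profile_def by blast

lemma ground_state_profile_tendsto_0: "ground_state_profile Q \<Longrightarrow> (Q \<longlongrightarrow> 0) at_top"
  unfolding ground_state_profile_def by blast

lemma ground_state_profileE:
  assumes "ground_state_profile Q"
  obtains Q' Q'' where "\<And>t. t > 0 \<Longrightarrow> (Q has_real_derivative Q' t) (at t)"
    and "\<And>t. t > 0 \<Longrightarrow> (Q' has_real_derivative Q'' t) (at t)"
    and "\<And>t. t > 0 \<Longrightarrow> Q'' t = Q t - Q t ^ 3 - 2 / t * Q' t"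
proof -
  obtain Q' Q'' where dQ: "\<And>t. t \<ge> 0 \<Longrightarrow> (Q has_real_derivative Q' t) (at t within {0..})"
    and dQ': "\<And>t. t \<ge> 0 \<Longrightarrow> (Q' has_real_derivative Q'' t) (at t within {0..})"
    and ode: "\<And>t. t > 0 \<Longrightarrow> - Q'' t - (2 / t) * Q' t + Q t - Q t ^ 3 = 0"
    using assms unfolding ground_state_profile_def by blast
  have "at t within {0..} = at t" if "t > 0" for t :: real
    by (rule at_within_open_subset[of t "{0<..}"]) (use that in auto)
  with dQ dQ' have "\<And>t. t > 0 \<Longrightarrow> (Q has_real_derivative Q' t) (at t)"
    "\<And>t. t > 0 \<Longrightarrow> (Q' has_real_derivative Q'' t) (at t)"
    by (metis less_imp_le)+
  moreover have "\<And>t. t > 0 \<Longrightarrow> Q'' t = Q t - Q t ^ 3 - 2 / t * Q' t"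
    using ode by (simp add: algebra_simps)
  ultimately show ?thesis using that by blast
qed

text \<open>\<open>u = t Q\<close> satisfies \<open>u'' = (1 - Q\<^sup>2) u\<close>, and \<open>1 - Q\<^sup>2 \<ge> (3/4)\<^sup>2\<close> once \<open>Q \<le> 1/2\<close>.\<close>
lemma ground_state_profile_exp_decay:
  assumes "ground_state_profile Q"
  obtains C where "\<And>t. t \<ge> 1 \<Longrightarrow> Q t \<le> C * exp (-(3/4) * t)"
proof -
  obtain Q' Q'' where dQ: "\<And>t. t > 0 \<Longrightarrow> (Q has_real_derivative Q' t) (at t)"
    and dQ': "\<And>t. t > 0 \<Longrightarrow> (Q' has_real_derivative Q'' t) (at t)"
    and ode: "\<And>t. t > 0 \<Longrightarrow> Q'' t = Q t - Q t ^ 3 - 2 / t * Q' t"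
    using ground_state_profileE[OF assms] by blast
  note pos = ground_state_profile_pos[OF assms] and lim = ground_state_profile_tendsto_0[OF assms]
  obtain T0 where T0: "\<And>t. t \<ge> T0 \<Longrightarrow> Q t \<le> 1/2"
    using order_tendstoD(2)[OF lim, of "1/2"] unfolding eventually_at_top_linorder
    by (auto intro: less_imp_le)
  define T where "T = max T0 1"
  have T: "T \<ge> 1" "\<And>t. t \<ge> T \<Longrightarrow> Q t \<le> 1/2" using T0 by (auto simp: T_def)
  define u where "u t = t * Q t" for t
  have tail: "u t \<le> u T * exp ((3/4) * (T - t))" if "t \<ge> T" for t
  proof (rule exp_decay_if_second_derivative_ge[where q = "\<lambda>s. 1 - Q s ^ 2"])
    show "(u has_real_derivative Q s + s * Q' s) (at s)" if "s \<ge> T" for s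
      unfolding u_def[abs_def] using dQ[of s] that T(1)
      by (auto intro!: derivative_eq_intros)
    show "((\<lambda>s. Q s + s * Q' s) has_real_derivative (1 - Q s ^ 2) * u s) (at s)" if "s \<ge> T" for s
    proof -
      have "((\<lambda>s. Q s + s * Q' s) has_real_derivative Q' s + (Q' s + s * Q'' s)) (at s)"
        using dQ[of s] dQ'[of s] that T(1) by (auto intro!: derivative_eq_intros)
      moreover have "Q' s + (Q' s + s * Q'' s) = (1 - Q s ^ 2) * u s"
        using ode[of s] that T(1) by (simp add: u_def field_simps power3_eq_cube power2_eq_square)
      ultimately show ?thesis by simp
    qed
    show "(3/4) ^ 2 \<le> 1 - Q s ^ 2" if "s \<ge> T" for s
    proof -
      have "Q s ^ 2 \<le> (1/2) ^ 2" using T(2)[OF that] pos[of s] that T(1) by (intro power_mono) auto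
      then show ?thesis by (simp add: power2_eq_square)
    qed
    show "u T \<ge> 0" using pos[of T] T(1) by (simp add: u_def)
    have "((\<lambda>s::real. s * exp (-(3/4) * s)) \<longlongrightarrow> 0) at_top" by real_asymp
    from tendsto_mult[OF lim this]
    show "((\<lambda>s. u s * exp (-(3/4) * s)) \<longlongrightarrow> 0) at_top"
      by (simp add: u_def algebra_simps)
  qed (use that in auto)
  have "continuous_on {1..T} Q"
    using dQ by (intro continuous_at_imp_continuous_on ballI)
      (metis DERIV_isCont atLeastAtMost_iff less_le_trans zero_less_one)
  moreover have "Q t \<le> (u T * exp ((3/4) * T)) * exp (-(3/4) * t)" if "T \<le> t" for t
  proof -
    have "Q t \<le> u t" using pos[of t] that T(1) by (simp add: u_def mult_le_cancel_right1)
    also have "\<dots> \<le> u T * exp ((3/4) * (T - t))" by (rule tail[OF that])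
    also have "\<dots> = (u T * exp ((3/4) * T)) * exp (-(3/4) * t)"
      by (simp add: mult.assoc flip: exp_add)
    finally show ?thesis .
  qed
  ultimately show ?thesis
    using exp_bound_extend_left that by blast
qed

lemma ground_state_profile_potential_bound:
  assumes "ground_state_profile Q"
  obtains B where "\<And>s. s \<ge> 1 \<Longrightarrow> \<bar>- 3 * Q s ^ 2\<bar> \<le> B * exp (-s) / s ^ 4"
proof -
  obtain C where C: "\<And>t. t \<ge> 1 \<Longrightarrow> Q t \<le> C * exp (-(3/4) * t)"
    using ground_state_profile_exp_decay[OF assms] by blast
  note pos = ground_state_profile_pos[OF assms]
  show ?thesis
  proof (rule that[of "3 * 4096 * C^2"])
    fix s :: real assume s: "s \<ge> 1"
    have "Q s ^ 2 \<le> (C * exp (-(3/4) * s)) ^ 2"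
      using pos[of s] C[OF s] s by (intro power_mono) auto
    also have "\<dots> = C^2 * exp (-(3/2) * s)"
      by (simp add: power_mult_distrib power2_eq_square exp_add[symmetric])
    finally have "s ^ 4 * Q s ^ 2 \<le> C^2 * (s ^ 4 * exp (-(3/2) * s))"
      using s by (simp add: mult_left_mono algebra_simps)
    also have "\<dots> \<le> C^2 * (4096 * exp (-s))"
      using power4_mult_exp_le[of s] s by (intro mult_left_mono) auto
    finally show "\<bar>- 3 * Q s ^ 2\<bar> \<le> 3 * 4096 * C^2 * exp (-s) / s ^ 4"
      using s by (simp add: field_simps)
  qed
qed

lemma ground_state_profile_decaying_potential:
  assumes "ground_state_profile Q"
  obtains B where "decaying_potential (\<lambda>t. - 3 * Q t ^ 2) B"
proof -
  obtain Q' Q'' where dQ: "\<And>t. t > 0 \<Longrightarrow> (Q has_real_derivative Q' t) (at t)"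
    and "\<And>t. t > 0 \<Longrightarrow> (Q' has_real_derivative Q'' t) (at t)"
    and "\<And>t. t > 0 \<Longrightarrow> Q'' t = Q t - Q t ^ 3 - 2 / t * Q' t"
    using ground_state_profileE[OF assms] by blast
  have "isCont Q t" if "t \<in> {1..}" for t
    using that dQ[of t] by (auto intro: DERIV_isCont)
  then have "continuous_on {1..} Q"
    by (intro continuous_at_imp_continuous_on ballI)
  moreover obtain B where "\<And>s. s \<ge> 1 \<Longrightarrow> \<bar>- 3 * Q s ^ 2\<bar> \<le> B * exp (-s) / s ^ 4"
    using ground_state_profile_potential_bound[OF assms] by blast
  ultimately have "decaying_potential (\<lambda>t. - 3 * Q t ^ 2) B"
    by (intro decaying_potential.intro continuous_intros)
  then show ?thesis by (rule that)
qed

lemma derivative_closed_ground_state_profile: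
  assumes "ground_state_profile Q"
  obtains Q' where "derivative_closed {1..} {Q, Q', \<lambda>t. t, \<lambda>t. 1 / t}"
proof -
  obtain Q' Q'' where dQ: "\<And>t. t > 0 \<Longrightarrow> (Q has_real_derivative Q' t) (at t)"
    and dQ': "\<And>t. t > 0 \<Longrightarrow> (Q' has_real_derivative Q'' t) (at t)"
    and ode: "\<And>t. t > 0 \<Longrightarrow> Q'' t = Q t - Q t ^ 3 - 2 / t * Q' t"
    using ground_state_profileE[OF assms] by blast
  let ?G = "{Q, Q', \<lambda>t. t, \<lambda>t. 1 / t}"
  have gens: "Q \<in> fun_algebra ?G" "Q' \<in> fun_algebra ?G" "(\<lambda>t. 1 / t) \<in> fun_algebra ?G"
    by (auto intro: fun_algebra.gen)
  have "derivative_closed {1..} ?G"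
    unfolding derivative_closed_def
  proof (intro ballI)
    fix g assume "g \<in> ?G"
    then consider "g = Q" | "g = Q'" | "g = (\<lambda>t. t)" | "g = (\<lambda>t. 1 / t)" by blast
    then show "\<exists>g'\<in>fun_algebra ?G. \<forall>t\<in>{1..}. (g has_real_derivative g' t) (at t within {1..})"
    proof cases
      case 1
      have "(Q has_real_derivative Q' t) (at t within {1..})" if "t \<in> {1..}" for t
        using has_field_derivative_at_within[OF dQ[of t]] that by simp
      then show ?thesis using 1 gens(2) by blast
    next
      case 2
      let ?q = "\<lambda>t. Q t + (- 1) * (Q t * (Q t * Q t)) + (- 2) * ((1 / t) * Q' t)"
      have "?q \<in> fun_algebra ?G"
        by (intro fun_algebra.add fun_algebra.mult fun_algebra.const gens)
      moreover have "\<forall>t\<in>{1..}. (Q' has_real_derivative ?q t) (at t within {1..})"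
      proof
        fix t :: real assume t: "t \<in> {1..}"
        have "Q'' t = ?q t" using ode[of t] t by (simp add: power3_eq_cube)
        then show "(Q' has_real_derivative ?q t) (at t within {1..})"
          using has_field_derivative_at_within[OF dQ'[of t]] t by simp
      qed
      ultimately show ?thesis unfolding 2 by (rule bexI[of _ ?q, rotated])
    next
      case 3
      show ?thesis unfolding 3 by (intro bexI[of _ "\<lambda>t. 1"] ballI fun_algebra.const DERIV_ident)
    next
      case 4
      let ?q = "\<lambda>t. (- 1) * ((1 / t) * (1 / t))"
      have "?q \<in> fun_algebra ?G"
        by (intro fun_algebra.mult fun_algebra.const gens)
      moreover have "\<forall>t\<in>{1..}. ((\<lambda>t. 1 / t) has_real_derivative ?q t) (at t within {1..})"
        by (auto intro!: derivative_eq_intros simp: power2_eq_square)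
      ultimately show ?thesis unfolding 4 by (rule bexI[of _ ?q, rotated])
    qed
  qed
  then show ?thesis by (rule that)
qed

lemma smooth_on_real_solution_diff:
  assumes "ground_state_profile Q"
    and y: "\<And>t. t \<ge> 1 \<Longrightarrow> (y has_real_derivative y' t) (at t within {1..})"
    and y': "\<And>t. t \<ge> 1 \<Longrightarrow> (y' has_real_derivative (2 / t ^ 2 + - 3 * Q t ^ 2) * y t) (at t within {1..})"
    and p: "p \<in> fun_algebra {\<lambda>t. t, \<lambda>t. 1 / t}"
  shows "smooth_on_real {1..} (\<lambda>t. y t - p t)"
proof -
  obtain Q' where closed: "derivative_closed {1..} {Q, Q', \<lambda>t. t, \<lambda>t. 1 / t}"
    using derivative_closed_ground_state_profile[OF assms(1)] by blast
  let ?G = "{Q, Q', \<lambda>t. t, \<lambda>t. 1 / t}"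
  have "(\<lambda>t. 2 * ((1 / t) * (1 / t)) + (- 3) * (Q t * Q t)) \<in> fun_algebra ?G"
    by (intro fun_algebra.intros) auto
  moreover have "(\<lambda>t. 2 * ((1 / t) * (1 / t)) + (- 3) * (Q t * Q t)) = (\<lambda>t. 2 / t ^ 2 + - 3 * Q t ^ 2)"
    by (simp add: fun_eq_iff power2_eq_square)
  ultimately have "derivative_closed {1..} (insert y (insert y' ?G))"
    using y y' by (intro derivative_closed_insert_solution[OF closed]) auto
  moreover have "(\<lambda>t. y t - p t) \<in> fun_algebra (insert y (insert y' ?G))"
    by (intro fun_algebra_diff fun_algebra.gen fun_algebra_mono[OF p]) auto
  ultimately show ?thesis by (rule smooth_on_real_fun_algebra)
qed

theorem lemma3p1:
  fixes Q :: "real \<Rightarrow> real"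
  assumes "ground_state_profile Q"
  shows "\<exists>\<eta>1 \<eta>2 :: real \<Rightarrow> real.
           smooth_on_real {1..} \<eta>1 \<and> smooth_on_real {1..} \<eta>2 \<and>
           bdd_above ((\<lambda>t. \<bar>exp t * \<eta>1 t\<bar> + \<bar>exp t * \<eta>2 t\<bar>) ` {1..}) \<and>
           (\<forall>F F' F'' :: real \<Rightarrow> real.
              smooth_on_real {1..} F \<and>
              (\<forall>t\<ge>1. (F has_real_derivative F' t) (at t within {1..})) \<and>
              (\<forall>t\<ge>1. (F' has_real_derivative F'' t) (at t within {1..})) \<and>
              (\<forall>t\<ge>1. F'' t = (2 / t ^ 2 - 3 * (Q t) ^ 2) * F t)
              \<longrightarrow> (\<exists>c1 c2 :: real. \<forall>t\<ge>1.
                     F t = c1 * (t ^ 2 + \<eta>1 t) + c2 * (1 / t + \<eta>2 t)))"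
proof -
  obtain B where "decaying_potential (\<lambda>t. - 3 * Q t ^ 2) B"
    using ground_state_profile_decaying_potential[OF assms] by blast
  then interpret decaying_potential "\<lambda>t. - 3 * Q t ^ 2" B .
  obtain y1 y1' y2 y2' C where
    y1: "\<And>t. t \<ge> 1 \<Longrightarrow> (y1 has_real_derivative y1' t) (at t within {1..})"
      "\<And>t. t \<ge> 1 \<Longrightarrow> (y1' has_real_derivative (2 / t ^ 2 + - 3 * Q t ^ 2) * y1 t) (at t within {1..})"
    and y2: "\<And>t. t \<ge> 1 \<Longrightarrow> (y2 has_real_derivative y2' t) (at t within {1..})"
      "\<And>t. t \<ge> 1 \<Longrightarrow> (y2' has_real_derivative (2 / t ^ 2 + - 3 * Q t ^ 2) * y2 t) (at t within {1..})"
    and near: "\<And>t. t \<ge> 1 \<Longrightarrow> \<bar>y1 t - t ^ 2\<bar> \<le> C * exp (-t)"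
      "\<And>t. t \<ge> 1 \<Longrightarrow> \<bar>y2 t - 1 / t\<bar> \<le> C * exp (-t)"
    and span: "\<And>F F'. (\<And>t. t \<ge> 1 \<Longrightarrow> (F has_real_derivative F' t) (at t within {1..})) \<Longrightarrow>
      (\<And>t. t \<ge> 1 \<Longrightarrow> (F' has_real_derivative (2 / t ^ 2 + - 3 * Q t ^ 2) * F t) (at t within {1..})) \<Longrightarrow>
      \<exists>c1 c2. \<forall>t\<ge>1. F t = c1 * y1 t + c2 * y2 t"
    using exists_fundamental_solutions by blast
  have "(\<lambda>t. t ^ 2) \<in> fun_algebra {\<lambda>t. t, \<lambda>t. 1 / t}" "(\<lambda>t. 1 / t) \<in> fun_algebra {\<lambda>t. t, \<lambda>t. 1 / t}"
    by (simp_all add: power2_in_fun_algebra fun_algebra.gen)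
  then have smooth: "smooth_on_real {1..} (\<lambda>t. y1 t - t ^ 2)" "smooth_on_real {1..} (\<lambda>t. y2 t - 1 / t)"
    using smooth_on_real_solution_diff[OF assms y1] smooth_on_real_solution_diff[OF assms y2] by blast+
  have bdd: "bdd_above ((\<lambda>t. \<bar>exp t * (y1 t - t ^ 2)\<bar> + \<bar>exp t * (y2 t - 1 / t)\<bar>) ` {1..})"
    using abs_exp_mult_le[OF near(1)] abs_exp_mult_le[OF near(2)]
    by (intro bdd_aboveI2[of _ _ "C + C"] add_mono) auto
  have span_solutions: "\<exists>c1 c2. \<forall>t\<ge>1. F t = c1 * y1 t + c2 * y2 t"
    if "\<forall>t\<ge>1. (F has_real_derivative F' t) (at t within {1..})"
      "\<forall>t\<ge>1. (F' has_real_derivative F'' t) (at t within {1..})"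
      "\<forall>t\<ge>1. F'' t = (2 / t ^ 2 - 3 * (Q t) ^ 2) * F t" for F F' F''
    by (rule span) (use that in auto)
  show ?thesis
    by (rule exI[of _ "\<lambda>t. y1 t - t ^ 2"], rule exI[of _ "\<lambda>t. y2 t - 1 / t"])
      (use smooth bdd span_solutions in auto)
qed

end
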